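(* Let $F$ be a local function of range $R$ satisfying conditions (i)–(iv) of the context with associated $\theta$, let $\Sigma\subseteq(0,\infty)$ be non-empty finite, $\kappa\in(0,1)$, $\mu\ge0$, $L\ge1$, $K\ge100$ integers, $z\in\mathbb L$ and $B=B_z$. Then for every $u>0$ and $\alpha\in\Sigma$: if $B$ is $(\Sigma,\kappa,\mu)$-good and $N_u(B)/\mathrm{cap}(B)\le\alpha$, then $\langle\bar e_B,L^u\rangle$ and $\langle m_B,L^u\rangle$ are smaller than $(1+\kappa)\alpha$ and $\frac1{|B|}\sum_{x\in B_R}F((L^u_{x+y})_{|y|_\infty\le R})<\theta((1+\kappa)\alpha)+\mu$; and if $B$ is $(\Sigma,\kappa,\mu)$-good and $N_u(B)/\mathrm{cap}(B)\ge\alpha$, then $\langle\bar e_B,L^u\rangle$ and $\langle m_B,L^u\rangle$ are bigger than $(1-\kappa)\alpha$ and $\frac1{|B|}\sum_{x\in B}F((L^u_{x+y})_{|y|_\infty\le R})>\theta((1-\kappa)\alpha)-\mu$. Moreover, if for each $\alpha\in\Sigma$ one has $\Sigma\cap((1-\kappa)\alpha,(1+\kappa)\alpha)=\{\alpha\}$, then whenever $B$ is $(\Sigma,\kappa,\mu)$-good, for all $u>0$ at most two elements of $\Sigma$ lie (in the wide sense) between any pair of values among $N_u(B)/\mathrm{cap}(B)$, $\langle\bar e_B,L^u\rangle$, $\langle m_B,L^u\rangle$.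
   Context: $d\ge3$. Random interlacements on $\mathbb Z^d$ (governed by $\mathbb P$) are a Poisson cloud of labelled doubly-infinite continuous-time simple random walk trajectories; $L^u_x$ is the total time spent at $x$ by trajectories with label at most $u$. $B(x,r)$ is the closed sup-norm ball. Local function: an integer $R\ge0$ and $F:[0,\infty)^{B(0,R)}\to[0,\infty)$ with (i) $F$ measurable and non-decreasing in each variable; (ii) $F(0)=0$; (iii) there is $c(F)$ with $F(\ell+\ell')\le F(\ell)+c(F)(1\{\ell'\ne0\}+\sum_{|x|_\infty\le R}\ell'_x)$; (iv) $\theta(u)=\mathbb E[F((L^u_y)_{|y|_\infty\le R})]$ is continuous in $u\ge0$. $F_0$ denotes the local function $F_0(\ell)=\ell$ with $R=0$ (so $\theta(u)=u$). Boxes: $\mathbb L=L\mathbb Z^d$; for $z\in\mathbb L$, $B_z=z+[0,L)^d$ and $U_z=z+[-KL+1,KL-1)^d$ (intersected with $\mathbb Z^d$). For $B=B_z$, $U=U_z$: $N_u(B)$ is the total number of excursions from $B$ to the outer boundary $\partial U$ in all interlacement trajectories with label $\le u$; $Z^B_\ell$, $\ell\ge1$, are the successive such excursions in the interlacement trajectories (ordered by label, then in time); $L^B_{a,x}=\sum_{1\le\ell\le a}\int_0^{T_U(Z^B_\ell)}1\{Z^B_\ell(s)=x\}ds$ ($T_U$ the exit time from $U$); $F^B_{a,x}=F((L^B_{a,x+y})_{|y|_\infty\le R})$, $F^B_a=\sum_{x\in B}F^B_{a,x}$; $\langle\rho,L^B_a\rangle=\sum_x\rho(x)L^B_{a,x}$.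 $e_B$ is the equilibrium measure of $B$, $\mathrm{cap}(B)$ its total mass, $\bar e_B=e_B/\mathrm{cap}(B)$, $m_B$ the normalized counting measure on $B$, $\langle\rho,L^u\rangle=\sum_x\rho(x)L^u_x$, $B_R=\{x\in B:B(x,R)\subseteq B\}$. Bad events: $\mathcal B^{B,F}_{\alpha,\kappa,\mu}=\{\langle\bar e_B,L^B_{\alpha\mathrm{cap}(B)}\rangle\notin(\alpha(1-\kappa),\alpha(1+\kappa))\}\cup\{\frac1{|B|}F^B_{\alpha\mathrm{cap}(B)}\notin(\theta(\alpha(1-\kappa))-\mu,\theta(\alpha(1+\kappa))+\mu)\}$, and $\mathcal B^{B,F}_{\Sigma,\kappa,\mu}=\bigcup_{\alpha\in\Sigma}(\mathcal B^{B,F}_{\alpha,\kappa,\mu}\cup\mathcal B^{B,F_0}_{\alpha,\kappa,0})$. $B$ is $(\Sigma,\kappa,\mu)$-bad if this event occurs, $(\Sigma,\kappa,\mu)$-good otherwise. *)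

theory Defs
  imports "HOL-Probability.Probability"
begin

type_synonym 'd site = "int ^ 'd"

definition supnorm :: "int ^ 'd \<Rightarrow> int" where
  "supnorm x = Max (range (\<lambda>i. \<bar>x $ i\<bar>))"

definition ballinf :: "int ^ 'd \<Rightarrow> int \<Rightarrow> (int ^ 'd) set" where
  "ballinf x r = {y. supnorm (y - x) \<le> r}"

definition boxB :: "int \<Rightarrow> int ^ 'd \<Rightarrow> (int ^ 'd) set" where
  "boxB L z = {x. \<forall>i. z $ i \<le> x $ i \<and> x $ i < z $ i + L}"

definition boxU :: "int \<Rightarrow> int \<Rightarrow> int ^ 'd \<Rightarrow> (int ^ 'd) set" where
  "boxU K L z = {x. \<forall>i. z $ i - K * L + 1 \<le> x $ i \<and> x $ i < z $ i + K * L - 1}"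

definition B_R :: "nat \<Rightarrow> (int ^ 'd) set \<Rightarrow> (int ^ 'd) set" where
  "B_R R B = {x \<in> B. ballinf x (int R) \<subseteq> B}"

definition unit_steps :: "(int ^ 'd) set" where
  "unit_steps = {v. (\<Sum>i\<in>UNIV. \<bar>v $ i\<bar>) = 1}"

text \<open>P_x[the discrete SRW started at x does not return to A during steps 1..n]\<close>
definition noreturn_prob :: "(int ^ 'd) set \<Rightarrow> int ^ 'd \<Rightarrow> nat \<Rightarrow> real" where
  "noreturn_prob A x n =
     real (card {ds :: (int ^ 'd) list. length ds = n \<and> set ds \<subseteq> unit_steps \<and>
                   (\<forall>i\<in>{1..n}. x + sum_list (take i ds) \<notin> A)})
     / (2 * real CARD('d)) ^ n"

text \<open>escape probability P_x[tilde H_A = infinity] (limit of a decreasing sequence)\<close>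
definition escape_prob :: "(int ^ 'd) set \<Rightarrow> int ^ 'd \<Rightarrow> real" where
  "escape_prob A x = (INF n. noreturn_prob A x n)"

definition eq_measure :: "(int ^ 'd) set \<Rightarrow> int ^ 'd \<Rightarrow> real" where
  "eq_measure A x = (if x \<in> A then escape_prob A x else 0)"

definition cap :: "(int ^ 'd) set \<Rightarrow> real" where
  "cap A = (\<Sum>x\<in>A. eq_measure A x)"

definition eq_bar :: "(int ^ 'd) set \<Rightarrow> int ^ 'd \<Rightarrow> real" where
  "eq_bar A x = eq_measure A x / cap A"

definition unif_meas :: "(int ^ 'd) set \<Rightarrow> int ^ 'd \<Rightarrow> real" where
  "unif_meas A x = (if x \<in> A then 1 / real (card A) else 0)"

definition pairing :: "(int ^ 'd \<Rightarrow> real) \<Rightarrow> (int ^ 'd) set \<Rightarrow> (int ^ 'd \<Rightarrow> real) \<Rightarrow> real" where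
  "pairing \<rho> A l = (\<Sum>x\<in>A. \<rho> x * l x)"

text \<open>A labelled continuous-time trajectory is given by (label, discrete skeleton X, holding
  times sigma): the walk sits at X n during a time interval of length sigma n.\<close>
type_synonym 'd config = "(real \<times> (int \<Rightarrow> int ^ 'd) \<times> (int \<Rightarrow> real)) set"

definition wf_config :: "('d::finite) config \<Rightarrow> bool" where
  "wf_config \<omega> \<longleftrightarrow>
     (\<forall>(v, X, \<sigma>) \<in> \<omega>.
        0 \<le> v \<and> (\<forall>n. X (n + 1) - X n \<in> unit_steps) \<and> (\<forall>n. 0 < \<sigma> n) \<and>
        (\<forall>x. finite {n. X n = x})) \<and>
     (\<forall>p\<in>\<omega>. \<forall>q\<in>\<omega>. fst p = fst q \<longrightarrow> p = q) \<and>
     (\<forall>u x. finite {p \<in> \<omega>. fst p \<le> u \<and> x \<in> range (fst (snd p))})"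

definition occ :: "('d::finite) config \<Rightarrow> real \<Rightarrow> int ^ 'd \<Rightarrow> real" where
  "occ \<omega> u x = (\<Sum>(v, X, \<sigma>) \<in> {p \<in> \<omega>. fst p \<le> u \<and> x \<in> range (fst (snd p))}.
                   \<Sum>k | X k = x. \<sigma> k)"

text \<open>n is the starting index of an excursion from B to the outer boundary of U\<close>
definition exc_start :: "(int ^ 'd) set \<Rightarrow> (int ^ 'd) set \<Rightarrow> (int \<Rightarrow> int ^ 'd) \<Rightarrow> int \<Rightarrow> bool" where
  "exc_start B U X n \<longleftrightarrow> X n \<in> B \<and>
     (\<forall>m<n. X m \<in> B \<longrightarrow> (\<exists>k. m < k \<and> k < n \<and> X k \<notin> U))"

definition exc_time :: "(int ^ 'd) set \<Rightarrow> (int \<Rightarrow> int ^ 'd) \<Rightarrow> (int \<Rightarrow> real) \<Rightarrow> int \<Rightarrow> int ^ 'd \<Rightarrow> real" where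
  "exc_time U X \<sigma> n x = (\<Sum>k | n \<le> k \<and> (\<forall>j. n \<le> j \<and> j \<le> k \<longrightarrow> X j \<in> U) \<and> X k = x. \<sigma> k)"

definition excs :: "('d::finite) config \<Rightarrow> (int ^ 'd) set \<Rightarrow> (int ^ 'd) set \<Rightarrow>
    (real \<times> (int \<Rightarrow> int ^ 'd) \<times> (int \<Rightarrow> real) \<times> int) set" where
  "excs \<omega> B U = {(v, X, \<sigma>, n). (v, X, \<sigma>) \<in> \<omega> \<and> exc_start B U X n}"

definition exc_before :: "real \<times> (int \<Rightarrow> int ^ 'd) \<times> (int \<Rightarrow> real) \<times> int \<Rightarrow>
    real \<times> (int \<Rightarrow> int ^ 'd) \<times> (int \<Rightarrow> real) \<times> int \<Rightarrow> bool" where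
  "exc_before e e' \<longleftrightarrow> fst e < fst e' \<or>
     (fst e = fst e' \<and> snd (snd (snd e)) < snd (snd (snd e')))"

definition first_excs :: "('d::finite) config \<Rightarrow> (int ^ 'd) set \<Rightarrow> (int ^ 'd) set \<Rightarrow> real \<Rightarrow>
    (real \<times> (int \<Rightarrow> int ^ 'd) \<times> (int \<Rightarrow> real) \<times> int) set" where
  "first_excs \<omega> B U a =
     {e \<in> excs \<omega> B U. real (card {e' \<in> excs \<omega> B U. exc_before e' e}) + 1 \<le> a}"

definition LB :: "('d::finite) config \<Rightarrow> (int ^ 'd) set \<Rightarrow> (int ^ 'd) set \<Rightarrow> real \<Rightarrow> int ^ 'd \<Rightarrow> real" where
  "LB \<omega> B U a x = (\<Sum>(v, X, \<sigma>, n) \<in> first_excs \<omega> B U a. exc_time U X \<sigma> n x)"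

definition Nexc :: "('d::finite) config \<Rightarrow> (int ^ 'd) set \<Rightarrow> (int ^ 'd) set \<Rightarrow> real \<Rightarrow> nat" where
  "Nexc \<omega> B U u = card {e \<in> excs \<omega> B U. fst e \<le> u}"

definition Floc :: "((int ^ 'd \<Rightarrow> real) \<Rightarrow> real) \<Rightarrow> nat \<Rightarrow> (int ^ 'd \<Rightarrow> real) \<Rightarrow> real" where
  "Floc F R l = F (restrict l (ballinf 0 (int R)))"

definition theta :: "((int ^ 'd \<Rightarrow> real) \<Rightarrow> real) \<Rightarrow> nat \<Rightarrow> ('d::finite) config measure \<Rightarrow> real \<Rightarrow> real" where
  "theta F R P u = (\<integral>\<omega>. Floc F R (occ \<omega> u) \<partial>P)"

definition local_function :: "((int ^ 'd \<Rightarrow> real) \<Rightarrow> real) \<Rightarrow> nat \<Rightarrow> ('d::finite) config measure \<Rightarrow> bool" where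
  "local_function F R P \<longleftrightarrow>
     F \<in> borel_measurable (PiM (ballinf 0 (int R)) (\<lambda>_. borel)) \<and>
     (\<forall>l. (\<forall>y\<in>ballinf 0 (int R). 0 \<le> l y) \<longrightarrow> 0 \<le> Floc F R l) \<and>
     (\<forall>l l'. (\<forall>y\<in>ballinf 0 (int R). 0 \<le> l y \<and> l y \<le> l' y) \<longrightarrow> Floc F R l \<le> Floc F R l') \<and>
     Floc F R (\<lambda>_. 0) = 0 \<and>
     (\<exists>c. \<forall>l l'. (\<forall>y\<in>ballinf 0 (int R). 0 \<le> l y \<and> 0 \<le> l' y) \<longrightarrow>
         Floc F R (\<lambda>y. l y + l' y) \<le> Floc F R l +
           c * ((if \<exists>y\<in>ballinf 0 (int R). l' y \<noteq> 0 then 1 else 0) + (\<Sum>y\<in>ballinf 0 (int R). l' y))) \<and>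
     continuous_on {0..} (theta F R P)"

text \<open>F_0(l) = l_0, range 0, with theta(u) = u\<close>
definition F0 :: "(int ^ 'd \<Rightarrow> real) \<Rightarrow> real" where
  "F0 l = l 0"

definition FB :: "((int ^ 'd \<Rightarrow> real) \<Rightarrow> real) \<Rightarrow> nat \<Rightarrow> ('d::finite) config \<Rightarrow> (int ^ 'd) set \<Rightarrow> (int ^ 'd) set \<Rightarrow> real \<Rightarrow> real" where
  "FB F R \<omega> B U a = (\<Sum>x\<in>B. Floc F R (\<lambda>y. LB \<omega> B U a (x + y)))"

definition bad_alpha :: "((int ^ 'd \<Rightarrow> real) \<Rightarrow> real) \<Rightarrow> nat \<Rightarrow> (real \<Rightarrow> real) \<Rightarrow> ('d::finite) config \<Rightarrow>
    (int ^ 'd) set \<Rightarrow> (int ^ 'd) set \<Rightarrow> real \<Rightarrow> real \<Rightarrow> real \<Rightarrow> bool" where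
  "bad_alpha F R th \<omega> B U \<alpha> \<kappa> \<mu> \<longleftrightarrow>
     \<not> (\<alpha> * (1 - \<kappa>) < pairing (eq_bar B) B (LB \<omega> B U (\<alpha> * cap B)) \<and>
        pairing (eq_bar B) B (LB \<omega> B U (\<alpha> * cap B)) < \<alpha> * (1 + \<kappa>)) \<or>
     \<not> (th (\<alpha> * (1 - \<kappa>)) - \<mu> < FB F R \<omega> B U (\<alpha> * cap B) / real (card B) \<and>
        FB F R \<omega> B U (\<alpha> * cap B) / real (card B) < th (\<alpha> * (1 + \<kappa>)) + \<mu>)"

definition bad :: "((int ^ 'd \<Rightarrow> real) \<Rightarrow> real) \<Rightarrow> nat \<Rightarrow> ('d::finite) config measure \<Rightarrow> ('d::finite) config \<Rightarrow>
    (int ^ 'd) set \<Rightarrow> (int ^ 'd) set \<Rightarrow> real set \<Rightarrow> real \<Rightarrow> real \<Rightarrow> bool" where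
  "bad F R P \<omega> B U \<Sigma> \<kappa> \<mu> \<longleftrightarrow>
     (\<exists>\<alpha>\<in>\<Sigma>. bad_alpha F R (theta F R P) \<omega> B U \<alpha> \<kappa> \<mu> \<or>
              bad_alpha F0 0 (\<lambda>u. u) \<omega> B U \<alpha> \<kappa> 0)"

definition good :: "((int ^ 'd \<Rightarrow> real) \<Rightarrow> real) \<Rightarrow> nat \<Rightarrow> ('d::finite) config measure \<Rightarrow> ('d::finite) config \<Rightarrow>
    (int ^ 'd) set \<Rightarrow> (int ^ 'd) set \<Rightarrow> real set \<Rightarrow> real \<Rightarrow> real \<Rightarrow> bool" where
  "good F R P \<omega> B U \<Sigma> \<kappa> \<mu> \<longleftrightarrow> \<not> bad F R P \<omega> B U \<Sigma> \<kappa> \<mu>"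

end

theory Submission
  imports Defs
begin

text \<open>Order the excursions from \<open>B\<close> to \<open>\<partial>U\<close> by label and then by time. At a site of \<open>B\<close>
  the occupation time \<open>L\<^sup>u\<close> is the total time spent there by the excursions of label at most \<open>u\<close>,
  and elsewhere these excursions spend at most \<open>L\<^sup>u\<close>. So if \<open>N\<^sub>u(B) \<le> a = \<alpha> cap(B)\<close>, the first
  \<open>a\<close> excursions include all those of label at most \<open>u\<close> and \<open>L\<^sup>u \<le> L\<^sup>B\<^sub>a\<close> on \<open>B\<close>; if
  \<open>N\<^sub>u(B) \<ge> a\<close>, they are among them and \<open>L\<^sup>B\<^sub>a \<le> L\<^sup>u\<close> everywhere. As \<open>F\<close> and the pairings
  are monotone, the bounds defining a good box pass from \<open>L\<^sup>B\<^sub>a\<close> to \<open>L\<^sup>u\<close>. For the last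
  claim, separation gives \<open>s\<^sub>1 \<le> (1-\<kappa>)s\<^sub>2\<close> and \<open>(1+\<kappa>)s\<^sub>2 \<le> s\<^sub>3\<close> for \<open>s\<^sub>1 < s\<^sub>2 < s\<^sub>3\<close> in \<open>\<Sigma>\<close>;
  comparing \<open>N\<^sub>u(B)/cap(B)\<close> with \<open>s\<^sub>2\<close> places all three quantities below \<open>s\<^sub>3\<close> or all above
  \<open>s\<^sub>1\<close>, so no such triple lies between two of them.\<close>

section \<open>Excursions of a single trajectory\<close>

lemma exc_start_stays_in_U_before_next:
  assumes "exc_start B U X n" "exc_start B U X n'" "n < n'"
    and "\<forall>j. n \<le> j \<and> j \<le> k \<longrightarrow> X j \<in> U" "n \<le> k"
  shows "k < n'"
proof -
  from assms(1) have "X n \<in> B" by (simp add: exc_start_def)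
  with assms(2,3) obtain j where "n < j" "j < n'" "X j \<notin> U"
    unfolding exc_start_def by blast
  with assms(4) have "\<not> n' \<le> k" by force
  then show ?thesis by simp
qed

text \<open>The latest excursion start before a visit \<open>k\<close> to \<open>B\<close> has not yet left \<open>U\<close> at time \<open>k\<close>:
  otherwise the first visit to \<open>B\<close> after the exit would be a later excursion start.\<close>
lemma exc_start_covers_visit:
  assumes fin: "finite {n. X n \<in> B}" and BU: "B \<subseteq> U" and k: "X k \<in> B"
  shows "\<exists>n. exc_start B U X n \<and> n \<le> k \<and> (\<forall>j. n \<le> j \<and> j \<le> k \<longrightarrow> X j \<in> U)"
proof -
  define starts where "starts = {n. exc_start B U X n \<and> n \<le> k}"
  have fin_starts: "finite starts"
    by (rule finite_subset[OF _ fin]) (auto simp: starts_def exc_start_def)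
  define n0 where "n0 = Min {n. X n \<in> B}"
  have "exc_start B U X n0" "n0 \<le> k"
    using Min_in[OF fin] Min_le[OF fin] k by (force simp: n0_def exc_start_def)+
  then have "starts \<noteq> {}" by (auto simp: starts_def)
  define n where "n = Max starts"
  have n: "exc_start B U X n" "n \<le> k"
    using Max_in[OF fin_starts \<open>starts \<noteq> {}\<close>] by (simp_all add: n_def starts_def)
  have "X j \<in> U" if j: "n \<le> j" "j \<le> k" for j
  proof (rule ccontr)
    assume "X j \<notin> U"
    define M where "M = {i. j \<le> i \<and> i \<le> k \<and> X i \<in> B}"
    have fin_M: "finite M" by (rule finite_subset[OF _ fin]) (auto simp: M_def)
    define m where "m = Min M"
    have "k \<in> M" using j k by (simp add: M_def)
    then have m: "m \<in> M" using Min_in[OF fin_M] by (auto simp: m_def)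
    then have "j \<le> m" "X m \<in> B" by (simp_all add: M_def)
    with \<open>X j \<notin> U\<close> BU have "j < m" by (metis le_less subsetD)
    have "exc_start B U X m"
      unfolding exc_start_def
    proof (intro conjI allI impI)
      show "X m \<in> B" using m by (simp add: M_def)
      fix m' assume "m' < m" "X m' \<in> B"
      moreover have "\<not> (j \<le> m' \<and> m' < m)"
        using Min_le[OF fin_M, of m'] m \<open>m' < m\<close> \<open>X m' \<in> B\<close> by (auto simp: m_def M_def)
      ultimately show "\<exists>i>m'. i < m \<and> X i \<notin> U" using \<open>j < m\<close> \<open>X j \<notin> U\<close> by force
    qed
    then have "m \<le> n" using m Max_ge[OF fin_starts] by (auto simp: n_def starts_def M_def)
    then show False using \<open>j < m\<close> j by simp
  qed
  with n show ?thesis by blast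
qed

lemma finite_visits:
  assumes "finite B" "\<forall>y. finite {n. X n = y}"
  shows "finite {n. X n \<in> B}"
proof -
  have "{n. X n \<in> B} = (\<Union>y\<in>B. {n. X n = y})" by auto
  with assms show ?thesis by simp
qed

lemma finite_exc_starts:
  assumes "finite B" "\<forall>y. finite {n. X n = y}"
  shows "finite {n. exc_start B U X n}"
  by (rule finite_subset[OF _ finite_visits[OF assms]]) (auto simp: exc_start_def)

lemma
  fixes X :: "int \<Rightarrow> int ^ 'd" and \<sigma> :: "int \<Rightarrow> real"
  assumes finB: "finite B" and BU: "B \<subseteq> U"
    and fin: "\<forall>y. finite {n. X n = y}" and pos: "\<forall>n. 0 < \<sigma> n"
  shows sum_exc_time_le: "(\<Sum>n | exc_start B U X n. exc_time U X \<sigma> n x) \<le> (\<Sum>k | X k = x. \<sigma> k)"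
    and sum_exc_time_eq:
      "x \<in> B \<Longrightarrow> (\<Sum>n | exc_start B U X n. exc_time U X \<sigma> n x) = (\<Sum>k | X k = x. \<sigma> k)"
proof -
  have fin_visits: "finite {n. X n \<in> B}" using finite_visits[OF finB fin] .
  have fin_starts: "finite {n. exc_start B U X n}" using finite_exc_starts[OF finB fin] .
  define C where "C n = {k. n \<le> k \<and> (\<forall>j. n \<le> j \<and> j \<le> k \<longrightarrow> X j \<in> U) \<and> X k = x}" for n
  have fin_C: "finite (C n)" for n
    by (rule finite_subset[OF _ fin[rule_format, of x]]) (auto simp: C_def)
  have C_disjoint: "C n \<inter> C n' = {}"
    if "exc_start B U X n" "exc_start B U X n'" "n < n'" for n n'
    using exc_start_stays_in_U_before_next[OF that] by (force simp: C_def)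
  have sum_eq: "(\<Sum>n | exc_start B U X n. exc_time U X \<sigma> n x) = sum \<sigma> (\<Union>(C ` {n. exc_start B U X n}))"
    unfolding exc_time_def C_def[symmetric]
  proof (rule sum.UNION_disjoint[symmetric])
    show "\<forall>n\<in>{n. exc_start B U X n}. \<forall>n'\<in>{n. exc_start B U X n}. n \<noteq> n' \<longrightarrow> C n \<inter> C n' = {}"
      using C_disjoint by (metis Int_commute linorder_neqE mem_Collect_eq)
  qed (use fin_starts fin_C in auto)
  have C_sub: "\<Union>(C ` {n. exc_start B U X n}) \<subseteq> {k. X k = x}" by (auto simp: C_def)
  show "(\<Sum>n | exc_start B U X n. exc_time U X \<sigma> n x) \<le> (\<Sum>k | X k = x. \<sigma> k)"
    unfolding sum_eq by (rule sum_mono2[OF fin[rule_format] C_sub]) (use pos in \<open>auto intro: less_imp_le\<close>)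
  assume "x \<in> B"
  have "{k. X k = x} \<subseteq> \<Union>(C ` {n. exc_start B U X n})"
    using exc_start_covers_visit[OF fin_visits BU] \<open>x \<in> B\<close> by (fastforce simp: C_def)
  with C_sub have "\<Union>(C ` {n. exc_start B U X n}) = {k. X k = x}" by blast
  with sum_eq show "(\<Sum>n | exc_start B U X n. exc_time U X \<sigma> n x) = (\<Sum>k | X k = x. \<sigma> k)"
    by simp
qed

section \<open>Excursions of a configuration\<close>

lemma wf_config_trajD:
  assumes "wf_config \<omega>" "(v, X, \<sigma>) \<in> \<omega>"
  shows "0 < \<sigma> n" and "finite {n. X n = y}"
  using assms unfolding wf_config_def by fastforce+

lemma wf_config_label_unique:
  assumes "wf_config \<omega>" "p \<in> \<omega>" "q \<in> \<omega>" "fst p = fst q"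
  shows "p = q"
  using assms unfolding wf_config_def by blast

lemma occ_nonneg:
  assumes "wf_config \<omega>"
  shows "0 \<le> occ \<omega> u x"
  unfolding occ_def
  by (auto intro!: sum_nonneg intro: less_imp_le wf_config_trajD(1)[OF assms])

definition visiting_trajs :: "('d::finite) config \<Rightarrow> (int ^ 'd) set \<Rightarrow> real \<Rightarrow> 'd config" where
  "visiting_trajs \<omega> B u = {p \<in> \<omega>. fst p \<le> u \<and> (\<exists>n. fst (snd p) n \<in> B)}"

definition excs_upto :: "('d::finite) config \<Rightarrow> (int ^ 'd) set \<Rightarrow> (int ^ 'd) set \<Rightarrow> real \<Rightarrow>
    (real \<times> (int \<Rightarrow> int ^ 'd) \<times> (int \<Rightarrow> real) \<times> int) set" where
  "excs_upto \<omega> B U u = {e \<in> excs \<omega> B U. fst e \<le> u}"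

definition exc_occ :: "(int ^ 'd) set \<Rightarrow> real \<times> (int \<Rightarrow> int ^ 'd) \<times> (int \<Rightarrow> real) \<times> int \<Rightarrow>
    int ^ 'd \<Rightarrow> real" where
  "exc_occ U e x = (case e of (v, X, \<sigma>, n) \<Rightarrow> exc_time U X \<sigma> n x)"

lemma Nexc_eq_card_excs_upto: "Nexc \<omega> B U u = card (excs_upto \<omega> B U u)"
  by (simp add: Nexc_def excs_upto_def)

lemma LB_eq_sum_exc_occ: "LB \<omega> B U a x = (\<Sum>e\<in>first_excs \<omega> B U a. exc_occ U e x)"
  unfolding LB_def exc_occ_def by (rule sum.cong) auto

lemma exc_occ_nonneg:
  assumes "wf_config \<omega>" "e \<in> excs \<omega> B U"
  shows "0 \<le> exc_occ U e x"
proof -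
  obtain v X \<sigma> n where e: "e = (v, X, \<sigma>, n)" "(v, X, \<sigma>) \<in> \<omega>"
    using assms(2) unfolding excs_def by auto
  then show ?thesis
    by (auto simp: exc_occ_def exc_time_def intro!: sum_nonneg intro: less_imp_le wf_config_trajD(1)[OF assms(1)])
qed

lemma finite_visiting_trajs:
  assumes "wf_config \<omega>" "finite B"
  shows "finite (visiting_trajs \<omega> B u)"
proof -
  have "visiting_trajs \<omega> B u = (\<Union>y\<in>B. {p \<in> \<omega>. fst p \<le> u \<and> y \<in> range (fst (snd p))})"
    by (auto simp: visiting_trajs_def)
  with assms show ?thesis by (simp add: wf_config_def)
qed

lemma excs_upto_eq_image:
  "excs_upto \<omega> B U u = (\<lambda>(p, n). (fst p, fst (snd p), snd (snd p), n)) `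
      (SIGMA p:visiting_trajs \<omega> B u. {n. exc_start B U (fst (snd p)) n})"
  unfolding excs_upto_def excs_def visiting_trajs_def
  by (force simp: exc_start_def image_iff)

lemma
  assumes wf: "wf_config \<omega>" and finB: "finite B"
  shows finite_excs_upto: "finite (excs_upto \<omega> B U u)"
    and sum_excs_upto_eq: "(\<Sum>e\<in>excs_upto \<omega> B U u. exc_occ U e x) =
      (\<Sum>p\<in>visiting_trajs \<omega> B u. \<Sum>n | exc_start B U (fst (snd p)) n.
          exc_time U (fst (snd p)) (snd (snd p)) n x)"
proof -
  have fin_starts: "finite {n. exc_start B U (fst (snd p)) n}" if "p \<in> \<omega>" for p
  proof -
    obtain v X \<sigma> where "p = (v, X, \<sigma>)" by (cases p)
    with that wf_config_trajD(2)[OF wf] show ?thesis using finite_exc_starts[OF finB] by auto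
  qed
  have fin_Sigma: "finite (SIGMA p:visiting_trajs \<omega> B u. {n. exc_start B U (fst (snd p)) n})"
    using finite_visiting_trajs[OF wf finB] fin_starts by (auto simp: visiting_trajs_def)
  then show "finite (excs_upto \<omega> B U u)"
    unfolding excs_upto_eq_image by simp
  have inj: "inj_on (\<lambda>(p, n). (fst p, fst (snd p), snd (snd p), n))
      (SIGMA p:visiting_trajs \<omega> B u. {n. exc_start B U (fst (snd p)) n})"
    by (auto simp: inj_on_def prod_eq_iff)
  show "(\<Sum>e\<in>excs_upto \<omega> B U u. exc_occ U e x) = (\<Sum>p\<in>visiting_trajs \<omega> B u.
      \<Sum>n | exc_start B U (fst (snd p)) n. exc_time U (fst (snd p)) (snd (snd p)) n x)"
    unfolding excs_upto_eq_image sum.reindex[OF inj]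
    by (subst sum.Sigma)
       (use finite_visiting_trajs[OF wf finB] fin_starts in \<open>auto simp: visiting_trajs_def exc_occ_def split_beta intro!: sum.cong\<close>)
qed

lemma
  fixes \<omega> :: "('d::finite) config"
  assumes wf: "wf_config \<omega>" and finB: "finite B" and BU: "B \<subseteq> U"
  shows sum_exc_occ_le_occ: "(\<Sum>e\<in>excs_upto \<omega> B U u. exc_occ U e x) \<le> occ \<omega> u x"
    and sum_exc_occ_eq_occ: "x \<in> B \<Longrightarrow> (\<Sum>e\<in>excs_upto \<omega> B U u. exc_occ U e x) = occ \<omega> u x"
proof -
  define W where "W = {p \<in> \<omega>. fst p \<le> u \<and> x \<in> range (fst (snd p))}"
  define h where "h p = (\<Sum>n | exc_start B U (fst (snd p)) n. exc_time U (fst (snd p)) (snd (snd p)) n x)"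
    for p :: "real \<times> (int \<Rightarrow> int ^ 'd) \<times> (int \<Rightarrow> real)"
  define g where "g p = (\<Sum>k | fst (snd p) k = x. snd (snd p) k)"
    for p :: "real \<times> (int \<Rightarrow> int ^ 'd) \<times> (int \<Rightarrow> real)"
  have lhs: "(\<Sum>e\<in>excs_upto \<omega> B U u. exc_occ U e x) = sum h (visiting_trajs \<omega> B u)"
    unfolding h_def by (rule sum_excs_upto_eq[OF wf finB])
  have occ: "occ \<omega> u x = sum g W"
    unfolding occ_def W_def g_def by (rule sum.cong) (auto simp: split_beta)
  have fin_W: "finite W"
    using wf by (simp add: W_def wf_config_def)
  have h_le_g: "h p \<le> g p" and h_eq_g: "x \<in> B \<Longrightarrow> h p = g p" if "p \<in> \<omega>" for p
  proof -
    obtain v X \<sigma> where p: "p = (v, X, \<sigma>)" by (cases p)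
    note traj = wf_config_trajD[OF wf that[unfolded p]]
    show "h p \<le> g p" "x \<in> B \<Longrightarrow> h p = g p"
      using sum_exc_time_le[OF finB BU] sum_exc_time_eq[OF finB BU] traj
      by (auto simp: h_def g_def p)
  qed
  have h_zero: "h p = 0" if "p \<notin> W" "p \<in> \<omega>" "fst p \<le> u" for p
  proof -
    have "\<forall>k. fst (snd p) k \<noteq> x" using that by (auto simp: W_def)
    then show ?thesis by (simp add: h_def exc_time_def)
  qed
  have g_nonneg: "0 \<le> g p" if "p \<in> \<omega>" for p
    using that by (cases p) (auto simp: g_def intro!: sum_nonneg intro: less_imp_le wf_config_trajD(1)[OF wf])
  have "sum h (visiting_trajs \<omega> B u) = sum h (visiting_trajs \<omega> B u \<inter> W)"
    by (rule sum.mono_neutral_right)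
       (use finite_visiting_trajs[OF wf finB] h_zero in \<open>auto simp: visiting_trajs_def\<close>)
  also have "\<dots> \<le> sum g (visiting_trajs \<omega> B u \<inter> W)"
    by (rule sum_mono) (use h_le_g in \<open>auto simp: W_def\<close>)
  also have "\<dots> \<le> sum g W"
    by (rule sum_mono2[OF fin_W]) (use g_nonneg in \<open>auto simp: W_def\<close>)
  finally show "(\<Sum>e\<in>excs_upto \<omega> B U u. exc_occ U e x) \<le> occ \<omega> u x"
    using lhs occ by simp
  assume "x \<in> B"
  then have W_sub: "W \<subseteq> visiting_trajs \<omega> B u"
    by (auto simp: W_def visiting_trajs_def)
  have "sum h (visiting_trajs \<omega> B u) = sum h W"
    by (rule sum.mono_neutral_right)
       (use finite_visiting_trajs[OF wf finB] h_zero W_sub in \<open>auto simp: visiting_trajs_def\<close>)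
  also have "\<dots> = sum g W"
    by (rule sum.cong) (use h_eq_g \<open>x \<in> B\<close> in \<open>auto simp: W_def\<close>)
  finally show "(\<Sum>e\<in>excs_upto \<omega> B U u. exc_occ U e x) = occ \<omega> u x"
    using lhs occ by simp
qed

section \<open>The first excursions in label-then-time order\<close>

lemma exc_before_trans: "exc_before a b \<Longrightarrow> exc_before b c \<Longrightarrow> exc_before a c"
  by (auto simp: exc_before_def)

lemma exc_before_irrefl: "\<not> exc_before e e"
  by (simp add: exc_before_def)

lemma exc_before_total:
  assumes wf: "wf_config \<omega>" and "e \<in> excs \<omega> B U" "e' \<in> excs \<omega> B U" "e \<noteq> e'"
  shows "exc_before e e' \<or> exc_before e' e"
proof -
  obtain v X \<sigma> n where e: "e = (v, X, \<sigma>, n)" "(v, X, \<sigma>) \<in> \<omega>"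
    using assms(2) unfolding excs_def by auto
  obtain v' X' \<sigma>' n' where e': "e' = (v', X', \<sigma>', n')" "(v', X', \<sigma>') \<in> \<omega>"
    using assms(3) unfolding excs_def by auto
  have "v = v' \<Longrightarrow> (v, X, \<sigma>) = (v', X', \<sigma>')"
    using wf_config_label_unique[OF wf e(2) e'(2)] by simp
  then show ?thesis
    using assms(4) e e' by (cases "v = v'") (auto simp: exc_before_def)
qed

lemma finite_excs_before:
  assumes "wf_config \<omega>" "finite B"
  shows "finite {e' \<in> excs \<omega> B U. exc_before e' e}"
proof (rule finite_subset[OF _ finite_excs_upto[OF assms, of U "fst e"]])
  show "{e' \<in> excs \<omega> B U. exc_before e' e} \<subseteq> excs_upto \<omega> B U (fst e)"
    by (auto simp: excs_upto_def exc_before_def)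
qed

lemma card_excs_before_strict_mono:
  assumes "wf_config \<omega>" "finite B" "e \<in> excs \<omega> B U" "exc_before e e'"
  shows "card {e'' \<in> excs \<omega> B U. exc_before e'' e} < card {e'' \<in> excs \<omega> B U. exc_before e'' e'}"
proof (rule psubset_card_mono[OF finite_excs_before[OF assms(1,2)]])
  show "{e'' \<in> excs \<omega> B U. exc_before e'' e} \<subset> {e'' \<in> excs \<omega> B U. exc_before e'' e'}"
    using assms(3,4) exc_before_trans exc_before_irrefl by blast
qed

text \<open>The number of predecessors is injective on excursions, so only finitely many excursions
  have fewer than \<open>a\<close> predecessors.\<close>
lemma finite_first_excs:
  assumes wf: "wf_config \<omega>" and finB: "finite B"
  shows "finite (first_excs \<omega> B U a)"
proof -
  define rank where "rank e = card {e' \<in> excs \<omega> B U. exc_before e' e}" for e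
  have "inj_on rank (excs \<omega> B U)"
  proof (rule inj_onI, rule ccontr)
    fix e e' assume "e \<in> excs \<omega> B U" "e' \<in> excs \<omega> B U" "rank e = rank e'" "e \<noteq> e'"
    then consider "exc_before e e'" | "exc_before e' e"
      using exc_before_total[OF wf] by blast
    then show False
      using card_excs_before_strict_mono[OF wf finB] \<open>e \<in> excs \<omega> B U\<close> \<open>e' \<in> excs \<omega> B U\<close>
        \<open>rank e = rank e'\<close> unfolding rank_def by cases fastforce+
  qed
  then have "inj_on rank (first_excs \<omega> B U a)"
    by (rule inj_on_subset) (auto simp: first_excs_def)
  moreover have "rank ` first_excs \<omega> B U a \<subseteq> {..nat \<lceil>a\<rceil>}"
  proof
    fix r assume "r \<in> rank ` first_excs \<omega> B U a"
    then have "real r + 1 \<le> a" by (auto simp: first_excs_def rank_def)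
    then show "r \<in> {..nat \<lceil>a\<rceil>}" by (simp add: le_nat_iff) linarith
  qed
  then have "finite (rank ` first_excs \<omega> B U a)" by (rule finite_subset) simp
  ultimately show ?thesis by (rule finite_imageD[rotated])
qed

lemma excs_upto_subset_first_excs:
  assumes wf: "wf_config \<omega>" and finB: "finite B" and N: "real (Nexc \<omega> B U u) \<le> a"
  shows "excs_upto \<omega> B U u \<subseteq> first_excs \<omega> B U a"
proof
  fix e assume e: "e \<in> excs_upto \<omega> B U u"
  have fin: "finite (excs_upto \<omega> B U u)" by (rule finite_excs_upto[OF wf finB])
  have "{e' \<in> excs \<omega> B U. exc_before e' e} \<subseteq> excs_upto \<omega> B U u - {e}"
    using e by (auto simp: excs_upto_def exc_before_def)
  then have "card {e' \<in> excs \<omega> B U. exc_before e' e} < card (excs_upto \<omega> B U u)"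
  proof -
    have "card {e' \<in> excs \<omega> B U. exc_before e' e} \<le> card (excs_upto \<omega> B U u - {e})"
      using fin by (intro card_mono \<open>_ \<subseteq> _\<close>) simp
    also have "\<dots> < card (excs_upto \<omega> B U u)" using fin e by (rule card_Diff1_less)
    finally show ?thesis .
  qed
  with N have "real (card {e' \<in> excs \<omega> B U. exc_before e' e}) + 1 \<le> a"
    unfolding Nexc_eq_card_excs_upto by linarith
  with e show "e \<in> first_excs \<omega> B U a"
    by (simp add: first_excs_def excs_upto_def)
qed

lemma first_excs_subset_excs_upto:
  assumes wf: "wf_config \<omega>" and finB: "finite B" and N: "a \<le> real (Nexc \<omega> B U u)"
  shows "first_excs \<omega> B U a \<subseteq> excs_upto \<omega> B U u"
proof
  fix e assume e: "e \<in> first_excs \<omega> B U a"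
  show "e \<in> excs_upto \<omega> B U u"
  proof (rule ccontr)
    assume "e \<notin> excs_upto \<omega> B U u"
    with e have "excs_upto \<omega> B U u \<subseteq> {e' \<in> excs \<omega> B U. exc_before e' e}"
      by (auto simp: first_excs_def excs_upto_def exc_before_def)
    then have "Nexc \<omega> B U u \<le> card {e' \<in> excs \<omega> B U. exc_before e' e}"
      unfolding Nexc_eq_card_excs_upto by (rule card_mono[OF finite_excs_before[OF wf finB]])
    with e N show False
      by (simp add: first_excs_def)
  qed
qed

lemma LB_nonneg:
  assumes "wf_config \<omega>"
  shows "0 \<le> LB \<omega> B U a x"
  unfolding LB_eq_sum_exc_occ
  by (rule sum_nonneg) (auto simp: first_excs_def intro: exc_occ_nonneg[OF assms])

lemma occ_le_LB:
  assumes wf: "wf_config \<omega>" and finB: "finite B" and BU: "B \<subseteq> U"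
    and N: "real (Nexc \<omega> B U u) \<le> a" and "x \<in> B"
  shows "occ \<omega> u x \<le> LB \<omega> B U a x"
proof -
  have "occ \<omega> u x = (\<Sum>e\<in>excs_upto \<omega> B U u. exc_occ U e x)"
    using sum_exc_occ_eq_occ[OF wf finB BU \<open>x \<in> B\<close>] by simp
  also have "\<dots> \<le> (\<Sum>e\<in>first_excs \<omega> B U a. exc_occ U e x)"
    by (rule sum_mono2[OF finite_first_excs[OF wf finB] excs_upto_subset_first_excs[OF wf finB N]])
       (auto simp: first_excs_def intro: exc_occ_nonneg[OF wf])
  finally show ?thesis by (simp add: LB_eq_sum_exc_occ)
qed

lemma LB_le_occ:
  assumes wf: "wf_config \<omega>" and finB: "finite B" and BU: "B \<subseteq> U"
    and N: "a \<le> real (Nexc \<omega> B U u)"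
  shows "LB \<omega> B U a x \<le> occ \<omega> u x"
proof -
  have "LB \<omega> B U a x \<le> (\<Sum>e\<in>excs_upto \<omega> B U u. exc_occ U e x)"
    unfolding LB_eq_sum_exc_occ
    by (rule sum_mono2[OF finite_excs_upto[OF wf finB] first_excs_subset_excs_upto[OF wf finB N]])
       (auto simp: excs_upto_def intro: exc_occ_nonneg[OF wf])
  also have "\<dots> \<le> occ \<omega> u x" by (rule sum_exc_occ_le_occ[OF wf finB BU])
  finally show ?thesis .
qed

lemma finite_boxB: "finite (boxB L (z :: int ^ 'd::finite))"
proof -
  have "boxB L z \<subseteq> vec_lambda ` (PiE UNIV (\<lambda>i. {z $ i..<z $ i + L}))"
  proof
    fix x assume "x \<in> boxB L z"
    then have "(\<lambda>i. x $ i) \<in> PiE UNIV (\<lambda>i. {z $ i..<z $ i + L})" by (auto simp: boxB_def)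
    then show "x \<in> vec_lambda ` (PiE UNIV (\<lambda>i. {z $ i..<z $ i + L}))"
      by (rule rev_image_eqI) simp
  qed
  then show ?thesis by (rule finite_subset) (simp add: finite_PiE)
qed

lemma boxB_subset_boxU:
  assumes "L \<ge> 1" "K \<ge> 2"
  shows "boxB L z \<subseteq> boxU K L z"
proof
  have KL: "2 * L \<le> K * L" using assms by (intro mult_right_mono) auto
  fix x assume x: "x \<in> boxB L z"
  have "z $ i - K * L + 1 \<le> x $ i \<and> x $ i < z $ i + K * L - 1" for i
  proof -
    have "z $ i \<le> x $ i" "x $ i < z $ i + L" using x by (simp_all add: boxB_def)
    with KL \<open>L \<ge> 1\<close> show ?thesis by linarith
  qed
  then show "x \<in> boxU K L z" by (simp add: boxU_def)
qed

lemma B_R_shift_mem: "x \<in> B_R R B \<Longrightarrow> y \<in> ballinf 0 (int R) \<Longrightarrow> x + y \<in> B"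
  unfolding B_R_def ballinf_def by auto

lemma pairing_mono:
  assumes "\<And>x. x \<in> A \<Longrightarrow> 0 \<le> \<rho> x" "\<And>x. x \<in> A \<Longrightarrow> l x \<le> l' x"
  shows "pairing \<rho> A l \<le> pairing \<rho> A l'"
  unfolding pairing_def by (rule sum_mono) (use assms in \<open>auto intro: mult_left_mono\<close>)

lemma pairing_unif_meas: "pairing (unif_meas A) A l = sum l A / real (card A)"
  unfolding pairing_def unif_meas_def by (simp add: sum_divide_distrib)

lemma eq_measure_nonneg: "0 \<le> eq_measure A x"
proof -
  have "0 \<le> noreturn_prob A x n" for n unfolding noreturn_prob_def by simp
  then have "0 \<le> escape_prob A x" unfolding escape_prob_def by (intro cINF_greatest) auto
  then show ?thesis by (simp add: eq_measure_def)
qed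

lemma cap_nonneg: "0 \<le> cap A"
  unfolding cap_def by (rule sum_nonneg) (simp add: eq_measure_nonneg)

lemma eq_bar_nonneg: "0 \<le> eq_bar A x"
  unfolding eq_bar_def by (simp add: eq_measure_nonneg cap_nonneg)

lemma supnorm_zero [simp]: "supnorm (0 :: int ^ 'd::finite) = 0"
  by (simp add: supnorm_def)

lemma FB_F0: "FB F0 0 \<omega> B U a = sum (LB \<omega> B U a) B"
  by (simp add: FB_def Floc_def F0_def ballinf_def)

lemma sum_Floc_shift_mono:
  assumes "local_function F R P"
    and "\<And>x y. x \<in> A \<Longrightarrow> y \<in> ballinf 0 (int R) \<Longrightarrow> 0 \<le> l (x + y) \<and> l (x + y) \<le> l' (x + y)"
  shows "(\<Sum>x\<in>A. Floc F R (\<lambda>y. l (x + y))) \<le> (\<Sum>x\<in>A. Floc F R (\<lambda>y. l' (x + y)))"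
proof (rule sum_mono)
  have mono: "\<forall>y\<in>ballinf 0 (int R). 0 \<le> l y \<and> l y \<le> l' y \<Longrightarrow> Floc F R l \<le> Floc F R l'" for l l'
    using assms(1) unfolding local_function_def by blast
  fix x assume "x \<in> A"
  with assms(2) show "Floc F R (\<lambda>y. l (x + y)) \<le> Floc F R (\<lambda>y. l' (x + y))"
    by (intro mono) simp
qed

lemma Floc_nonneg:
  assumes "local_function F R P" "\<And>y. y \<in> ballinf 0 (int R) \<Longrightarrow> 0 \<le> l y"
  shows "0 \<le> Floc F R l"
  using assms unfolding local_function_def by blast

section \<open>Bounds in a good box\<close>

lemma good_LB_bounds:
  assumes "good F R P \<omega> B U \<Sigma> \<kappa> \<mu>" "\<alpha> \<in> \<Sigma>"
  shows "(1 - \<kappa>) * \<alpha> < pairing (eq_bar B) B (LB \<omega> B U (\<alpha> * cap B))"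
    and "pairing (eq_bar B) B (LB \<omega> B U (\<alpha> * cap B)) < (1 + \<kappa>) * \<alpha>"
    and "(1 - \<kappa>) * \<alpha> < sum (LB \<omega> B U (\<alpha> * cap B)) B / real (card B)"
    and "sum (LB \<omega> B U (\<alpha> * cap B)) B / real (card B) < (1 + \<kappa>) * \<alpha>"
    and "theta F R P ((1 - \<kappa>) * \<alpha>) - \<mu> < FB F R \<omega> B U (\<alpha> * cap B) / real (card B)"
    and "FB F R \<omega> B U (\<alpha> * cap B) / real (card B) < theta F R P ((1 + \<kappa>) * \<alpha>) + \<mu>"
  using assms unfolding good_def bad_def bad_alpha_def by (auto simp: FB_F0 mult.commute)

lemma good_cap_pos:
  assumes "good F R P \<omega> B U \<Sigma> \<kappa> \<mu>" "\<alpha> \<in> \<Sigma>" "0 < \<alpha>" "\<kappa> < 1"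
  shows "0 < cap B"
proof (rule ccontr)
  assume "\<not> 0 < cap B"
  then have "pairing (eq_bar B) B (LB \<omega> B U (\<alpha> * cap B)) = 0"
    using cap_nonneg[of B] by (simp add: pairing_def eq_bar_def)
  moreover have "0 < (1 - \<kappa>) * \<alpha>" using assms(3,4) by simp
  ultimately show False using good_LB_bounds(1)[OF assms(1,2)] by linarith
qed

lemma good_upper_bounds:
  fixes F :: "(int ^ 'd \<Rightarrow> real) \<Rightarrow> real" and \<omega> :: "('d::finite) config"
  assumes wf: "wf_config \<omega>" and finB: "finite B" and BU: "B \<subseteq> U"
    and lf: "local_function F R P" and good: "good F R P \<omega> B U \<Sigma> \<kappa> \<mu>"
    and \<alpha>: "\<alpha> \<in> \<Sigma>" "0 < \<alpha>" and \<kappa>: "\<kappa> < 1"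
    and N: "real (Nexc \<omega> B U u) / cap B \<le> \<alpha>"
  shows "pairing (eq_bar B) B (occ \<omega> u) < (1 + \<kappa>) * \<alpha>"
    and "pairing (unif_meas B) B (occ \<omega> u) < (1 + \<kappa>) * \<alpha>"
    and "(\<Sum>x\<in>B_R R B. Floc F R (\<lambda>y. occ \<omega> u (x + y))) / real (card B)
           < theta F R P ((1 + \<kappa>) * \<alpha>) + \<mu>"
proof -
  define a where "a = \<alpha> * cap B"
  have "real (Nexc \<omega> B U u) \<le> a"
    using N good_cap_pos[OF good \<alpha> \<kappa>] by (simp add: a_def pos_divide_le_eq)
  then have occ_le: "occ \<omega> u x \<le> LB \<omega> B U a x" if "x \<in> B" for x
    using occ_le_LB[OF wf finB BU _ that] by blast
  have "pairing (eq_bar B) B (occ \<omega> u) \<le> pairing (eq_bar B) B (LB \<omega> B U a)"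
    by (rule pairing_mono) (use occ_le eq_bar_nonneg in auto)
  with good_LB_bounds(2)[OF good \<alpha>(1)] show "pairing (eq_bar B) B (occ \<omega> u) < (1 + \<kappa>) * \<alpha>"
    by (simp add: a_def)
  have "sum (occ \<omega> u) B / real (card B) \<le> sum (LB \<omega> B U a) B / real (card B)"
    by (intro divide_right_mono sum_mono occ_le) simp_all
  with good_LB_bounds(4)[OF good \<alpha>(1)] show "pairing (unif_meas B) B (occ \<omega> u) < (1 + \<kappa>) * \<alpha>"
    by (simp add: a_def pairing_unif_meas)
  have "(\<Sum>x\<in>B_R R B. Floc F R (\<lambda>y. occ \<omega> u (x + y)))
      \<le> (\<Sum>x\<in>B_R R B. Floc F R (\<lambda>y. LB \<omega> B U a (x + y)))"
    by (rule sum_Floc_shift_mono[OF lf]) (use B_R_shift_mem occ_nonneg[OF wf] occ_le in blast)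
  also have "\<dots> \<le> FB F R \<omega> B U a"
    unfolding FB_def
    by (rule sum_mono2[OF finB]) (auto simp: B_R_def intro: Floc_nonneg[OF lf] LB_nonneg[OF wf])
  finally have "(\<Sum>x\<in>B_R R B. Floc F R (\<lambda>y. occ \<omega> u (x + y))) / real (card B)
      \<le> FB F R \<omega> B U a / real (card B)"
    by (rule divide_right_mono) simp
  with good_LB_bounds(6)[OF good \<alpha>(1)]
  show "(\<Sum>x\<in>B_R R B. Floc F R (\<lambda>y. occ \<omega> u (x + y))) / real (card B)
      < theta F R P ((1 + \<kappa>) * \<alpha>) + \<mu>"
    by (simp add: a_def)
qed

lemma good_lower_bounds:
  fixes F :: "(int ^ 'd \<Rightarrow> real) \<Rightarrow> real" and \<omega> :: "('d::finite) config"
  assumes wf: "wf_config \<omega>" and finB: "finite B" and BU: "B \<subseteq> U"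
    and lf: "local_function F R P" and good: "good F R P \<omega> B U \<Sigma> \<kappa> \<mu>"
    and \<alpha>: "\<alpha> \<in> \<Sigma>" "0 < \<alpha>" and \<kappa>: "\<kappa> < 1"
    and N: "\<alpha> \<le> real (Nexc \<omega> B U u) / cap B"
  shows "(1 - \<kappa>) * \<alpha> < pairing (eq_bar B) B (occ \<omega> u)"
    and "(1 - \<kappa>) * \<alpha> < pairing (unif_meas B) B (occ \<omega> u)"
    and "theta F R P ((1 - \<kappa>) * \<alpha>) - \<mu>
           < (\<Sum>x\<in>B. Floc F R (\<lambda>y. occ \<omega> u (x + y))) / real (card B)"
proof -
  define a where "a = \<alpha> * cap B"
  have "a \<le> real (Nexc \<omega> B U u)"
    using N good_cap_pos[OF good \<alpha> \<kappa>] by (simp add: a_def pos_le_divide_eq)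
  then have LB_le: "LB \<omega> B U a x \<le> occ \<omega> u x" for x
    by (rule LB_le_occ[OF wf finB BU])
  have "pairing (eq_bar B) B (LB \<omega> B U a) \<le> pairing (eq_bar B) B (occ \<omega> u)"
    by (rule pairing_mono) (use LB_le eq_bar_nonneg in auto)
  with good_LB_bounds(1)[OF good \<alpha>(1)] show "(1 - \<kappa>) * \<alpha> < pairing (eq_bar B) B (occ \<omega> u)"
    by (simp add: a_def)
  have "sum (LB \<omega> B U a) B / real (card B) \<le> sum (occ \<omega> u) B / real (card B)"
    by (intro divide_right_mono sum_mono LB_le) simp_all
  with good_LB_bounds(3)[OF good \<alpha>(1)] show "(1 - \<kappa>) * \<alpha> < pairing (unif_meas B) B (occ \<omega> u)"
    by (simp add: a_def pairing_unif_meas)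
  have "FB F R \<omega> B U a \<le> (\<Sum>x\<in>B. Floc F R (\<lambda>y. occ \<omega> u (x + y)))"
    unfolding FB_def by (rule sum_Floc_shift_mono[OF lf]) (use LB_nonneg[OF wf] LB_le in blast)
  then have "FB F R \<omega> B U a / real (card B)
      \<le> (\<Sum>x\<in>B. Floc F R (\<lambda>y. occ \<omega> u (x + y))) / real (card B)"
    by (rule divide_right_mono) simp
  with good_LB_bounds(5)[OF good \<alpha>(1)]
  show "theta F R P ((1 - \<kappa>) * \<alpha>) - \<mu>
      < (\<Sum>x\<in>B. Floc F R (\<lambda>y. occ \<omega> u (x + y))) / real (card B)"
    by (simp add: a_def)
qed

section \<open>Separated levels\<close>

lemma obtain_three_increasing:
  fixes S :: "'a::linorder set"
  assumes "finite S" "3 \<le> card S"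
  obtains s1 s2 s3 where "s1 \<in> S" "s2 \<in> S" "s3 \<in> S" "s1 < s2" "s2 < s3"
proof -
  define xs where "xs = sorted_list_of_set S"
  have len: "3 \<le> length xs" and sorted: "sorted_wrt (<) xs" and set_xs: "set xs = S"
    using assms by (simp_all add: xs_def)
  show ?thesis
  proof (rule that)
    show "xs ! 0 \<in> S" "xs ! 1 \<in> S" "xs ! 2 \<in> S"
      using len unfolding set_xs[symmetric] by (auto intro!: nth_mem)
    show "xs ! 0 < xs ! 1" "xs ! 1 < xs ! 2"
      using len sorted by (simp_all add: sorted_wrt_nth_less)
  qed
qed

lemma separated_levels_gap:
  fixes \<kappa> s1 s2 s3 :: real
  assumes sep: "\<Sigma> \<inter> {(1 - \<kappa>) * s2 <..< (1 + \<kappa>) * s2} = {s2}"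
    and "s1 \<in> \<Sigma>" "s3 \<in> \<Sigma>" "s1 < s2" "s2 < s3" "0 < \<kappa>" "0 < s2"
  shows "s1 \<le> (1 - \<kappa>) * s2" and "(1 + \<kappa>) * s2 \<le> s3"
proof -
  have "s1 \<notin> {(1 - \<kappa>) * s2 <..< (1 + \<kappa>) * s2}" "s3 \<notin> {(1 - \<kappa>) * s2 <..< (1 + \<kappa>) * s2}"
    using sep assms(2-5) by auto
  moreover have "(1 - \<kappa>) * s2 < s2" "s2 < (1 + \<kappa>) * s2" using assms(6,7) by simp_all
  ultimately show "s1 \<le> (1 - \<kappa>) * s2" "(1 + \<kappa>) * s2 \<le> s3"
    using assms(4,5) by auto
qed

lemma card_separated_levels_between_le_two:
  fixes r l1 l2 a b \<kappa> :: real
  assumes fin: "finite \<Sigma>" and sep: "\<forall>s\<in>\<Sigma>. \<Sigma> \<inter> {(1 - \<kappa>) * s <..< (1 + \<kappa>) * s} = {s}"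
    and \<kappa>: "0 < \<kappa>" and pos: "\<Sigma> \<subseteq> {0<..}"
    and upper: "\<And>s. s \<in> \<Sigma> \<Longrightarrow> r \<le> s \<Longrightarrow> l1 < (1 + \<kappa>) * s \<and> l2 < (1 + \<kappa>) * s"
    and lower: "\<And>s. s \<in> \<Sigma> \<Longrightarrow> s \<le> r \<Longrightarrow> (1 - \<kappa>) * s < l1 \<and> (1 - \<kappa>) * s < l2"
    and ab: "a \<in> {r, l1, l2}" "b \<in> {r, l1, l2}"
  shows "card {s \<in> \<Sigma>. min a b \<le> s \<and> s \<le> max a b} \<le> 2"
proof (rule ccontr)
  assume "\<not> ?thesis"
  have "finite {s \<in> \<Sigma>. min a b \<le> s \<and> s \<le> max a b}" using fin by simp
  moreover from \<open>\<not> ?thesis\<close> have "3 \<le> card {s \<in> \<Sigma>. min a b \<le> s \<and> s \<le> max a b}" by simp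
  ultimately obtain s1 s2 s3 where
    "s1 \<in> {s \<in> \<Sigma>. min a b \<le> s \<and> s \<le> max a b}" "s2 \<in> {s \<in> \<Sigma>. min a b \<le> s \<and> s \<le> max a b}"
    "s3 \<in> {s \<in> \<Sigma>. min a b \<le> s \<and> s \<le> max a b}" "s1 < s2" "s2 < s3"
    by (rule obtain_three_increasing)
  then have s: "s1 \<in> \<Sigma>" "s2 \<in> \<Sigma>" "s3 \<in> \<Sigma>" "s1 < s2" "s2 < s3"
    and between: "min a b \<le> s1" "s3 \<le> max a b"
    by simp_all
  have "0 < s2" using pos s(2) by auto
  note gap = separated_levels_gap[OF sep[rule_format, OF s(2)] s(1,3-5) \<kappa> this]
  show False
  proof (cases "r \<le> s2")
    case True
    with upper[OF s(2)] gap(2) s(5) have "max a b < s3" using ab by auto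
    with between show False by simp
  next
    case False
    with lower[OF s(2)] gap(1) s(4) have "s1 < min a b" using ab by auto
    with between show False by simp
  qed
qed

theorem lemma2p4:
  fixes F :: "(int ^ 'd \<Rightarrow> real) \<Rightarrow> real" and R :: nat
    and P :: "'d config measure" and \<omega> :: "'d config"
    and \<Sigma> :: "real set" and \<kappa> \<mu> :: real and L K :: int and z :: "int ^ 'd"
  assumes "CARD('d) \<ge> 3"
    and "prob_space P" and "local_function F R P"
    and "finite \<Sigma>" and "\<Sigma> \<noteq> {}" and "\<Sigma> \<subseteq> {0<..}"
    and "0 < \<kappa>" and "\<kappa> < 1" and "0 \<le> \<mu>"
    and "L \<ge> 1" and "K \<ge> 100" and "\<forall>i. L dvd z $ i"
    and "wf_config \<omega>"
  shows
   "(\<forall>u>0. \<forall>\<alpha>\<in>\<Sigma>.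
      (good F R P \<omega> (boxB L z) (boxU K L z) \<Sigma> \<kappa> \<mu> \<and>
       real (Nexc \<omega> (boxB L z) (boxU K L z) u) / cap (boxB L z) \<le> \<alpha> \<longrightarrow>
         pairing (eq_bar (boxB L z)) (boxB L z) (occ \<omega> u) < (1 + \<kappa>) * \<alpha> \<and>
         pairing (unif_meas (boxB L z)) (boxB L z) (occ \<omega> u) < (1 + \<kappa>) * \<alpha> \<and>
         (\<Sum>x\<in>B_R R (boxB L z). Floc F R (\<lambda>y. occ \<omega> u (x + y))) / real (card (boxB L z))
           < theta F R P ((1 + \<kappa>) * \<alpha>) + \<mu>) \<and>
      (good F R P \<omega> (boxB L z) (boxU K L z) \<Sigma> \<kappa> \<mu> \<and>
       real (Nexc \<omega> (boxB L z) (boxU K L z) u) / cap (boxB L z) \<ge> \<alpha> \<longrightarrow>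
         pairing (eq_bar (boxB L z)) (boxB L z) (occ \<omega> u) > (1 - \<kappa>) * \<alpha> \<and>
         pairing (unif_meas (boxB L z)) (boxB L z) (occ \<omega> u) > (1 - \<kappa>) * \<alpha> \<and>
         (\<Sum>x\<in>boxB L z. Floc F R (\<lambda>y. occ \<omega> u (x + y))) / real (card (boxB L z))
           > theta F R P ((1 - \<kappa>) * \<alpha>) - \<mu>)) \<and>
    ((\<forall>\<alpha>\<in>\<Sigma>. \<Sigma> \<inter> {(1 - \<kappa>) * \<alpha> <..< (1 + \<kappa>) * \<alpha>} = {\<alpha>}) \<longrightarrow>
       good F R P \<omega> (boxB L z) (boxU K L z) \<Sigma> \<kappa> \<mu> \<longrightarrow>
       (\<forall>u>0. \<forall>a\<in>{real (Nexc \<omega> (boxB L z) (boxU K L z) u) / cap (boxB L z),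
                   pairing (eq_bar (boxB L z)) (boxB L z) (occ \<omega> u),
                   pairing (unif_meas (boxB L z)) (boxB L z) (occ \<omega> u)}.
              \<forall>b\<in>{real (Nexc \<omega> (boxB L z) (boxU K L z) u) / cap (boxB L z),
                   pairing (eq_bar (boxB L z)) (boxB L z) (occ \<omega> u),
                   pairing (unif_meas (boxB L z)) (boxB L z) (occ \<omega> u)}.
                card {s \<in> \<Sigma>. min a b \<le> s \<and> s \<le> max a b} \<le> 2))"
proof -
  let ?B = "boxB L z" and ?U = "boxU K L z"
  let ?levels = "\<lambda>u. {real (Nexc \<omega> ?B ?U u) / cap ?B,
    pairing (eq_bar ?B) ?B (occ \<omega> u), pairing (unif_meas ?B) ?B (occ \<omega> u)}"
  have finB: "finite ?B" by (rule finite_boxB)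
  have BU: "?B \<subseteq> ?U" using \<open>L \<ge> 1\<close> \<open>K \<ge> 100\<close> by (intro boxB_subset_boxU) auto
  have \<alpha>_pos: "0 < \<alpha>" if "\<alpha> \<in> \<Sigma>" for \<alpha> using that \<open>\<Sigma> \<subseteq> {0<..}\<close> by auto
  note upper = good_upper_bounds[OF \<open>wf_config \<omega>\<close> finB BU \<open>local_function F R P\<close> _ _ \<alpha>_pos \<open>\<kappa> < 1\<close>]
  note lower = good_lower_bounds[OF \<open>wf_config \<omega>\<close> finB BU \<open>local_function F R P\<close> _ _ \<alpha>_pos \<open>\<kappa> < 1\<close>]
  show ?thesis
  proof (intro conjI impI allI ballI; (elim conjE)?)
    show "card {s \<in> \<Sigma>. min a b \<le> s \<and> s \<le> max a b} \<le> 2"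
      if sep: "\<forall>\<alpha>\<in>\<Sigma>. \<Sigma> \<inter> {(1 - \<kappa>) * \<alpha> <..< (1 + \<kappa>) * \<alpha>} = {\<alpha>}"
        and good: "good F R P \<omega> ?B ?U \<Sigma> \<kappa> \<mu>" and ab: "a \<in> ?levels u" "b \<in> ?levels u"
      for u a b
      by (rule card_separated_levels_between_le_two[OF \<open>finite \<Sigma>\<close> sep \<open>0 < \<kappa>\<close> \<open>\<Sigma> \<subseteq> {0<..}\<close> _ _ ab])
         (simp_all add: upper(1,2)[OF good] lower(1,2)[OF good])
  qed (rule upper lower; assumption)+
qed

end
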